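(* Let $S$ be a training set of examples $(\mathbf{x},y)$ with $\mathbf{x}\in[-1,1]^d$, $y\in\{1,\dots,k\}$, and let $\epsilon>0$, $c>0$, $r\in\mathbb{N}$. Assume there exists $W^\star\in\mathbb{R}^{k\times d}$ with $L(W^\star)\le\epsilon$, all entries of $W^\star$ in $[-c,c]$, and $\|W^\star\|_{\infty,0}=r$. Then ShareBoost, run for $T=\lceil 4r^2c^2/\epsilon\rceil$ iterations, outputs a matrix $W$ with $L(W)\le 2\epsilon$ and $\|W\|_{\infty,0}\le \lceil 4r^2c^2/\epsilon\rceil$.
   Context: For $W\in\mathbb{R}^{k\times d}$, $W_{\cdot,i}$ denotes its $i$-th column and $\|W\|_{\infty,0}=|\{i:\|W_{\cdot,i}\|_\infty>0\}|$. The loss of $W$ on $(\mathbf{x},y)$ is $\ell(W,(\mathbf{x},y))=\ln\sum_{y'\in\{1,\dots,k\}}\exp\big(\mathbf{1}[y'\neq y]-(W\mathbf{x})_y+(W\mathbf{x})_{y'}\big)$, and $L(W)=\frac1{|S|}\sum_{(\mathbf{x},y)\in S}\ell(W,(\mathbf{x},y))$. Write $\nabla_r L(W)\in\mathbb{R}^k$ for the $r$-th column of $\nabla L(W)$. The ShareBoost algorithm: initialize $W=0$, $I=\emptyset$; for $t=1,\dots,T$: choose $r\in\{1,\dots,d\}$ maximizing $\|\nabla_r L(W)\|_1$ (ties broken arbitrarily), set $I\leftarrow I\cup\{r\}$, and set $W\leftarrow\arg\min\{L(V): V_{\cdot,i}=0\text{ for all }i\notin I\}$ (a minimizer is assumed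 to be attained at every iteration). *)

theory Defs
  imports "HOL-Analysis.Analysis"
begin

text \<open>Classes are indexed by a finite type 'k (k = CARD('k)), features by a finite
type 'd (d = CARD('d)).  A weight matrix W in R^{k x d} is a value of type real^'d^'k,
so W $ y $ i is the entry in row y, column i.\<close>

type_synonym ('d,'k) example = "(real^'d) \<times> 'k"

definition sb_loss :: "real^'d^'k \<Rightarrow> ('d,'k) example \<Rightarrow> real" where
  "sb_loss W ex = (case ex of (x, y) \<Rightarrow>
     ln (\<Sum>y'\<in>(UNIV::'k set). exp ((if y' \<noteq> y then 1 else 0) - (W *v x) $ y + (W *v x) $ y')))"

definition sb_L :: "('d,'k) example list \<Rightarrow> real^'d^'k \<Rightarrow> real" where
  "sb_L S W = (\<Sum>ex\<leftarrow>S. sb_loss W ex) / real (length S)"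

text \<open>Gradient of L at W (w.r.t. the Frobenius inner product on real^'d^'k).\<close>
definition sb_grad :: "('d,'k) example list \<Rightarrow> real^'d^'k \<Rightarrow> real^'d^'k" where
  "sb_grad S W = (THE G. GDERIV (sb_L S) W :> G)"

definition l1norm :: "real^'k \<Rightarrow> real" where
  "l1norm v = (\<Sum>j\<in>(UNIV::'k set). \<bar>v $ j\<bar>)"

definition norm_inf0 :: "real^'d^'k \<Rightarrow> nat" where
  "norm_inf0 W = card {i::'d. infnorm (column i W) > 0}"

text \<open>A run of ShareBoost for T iterations: Ws t, Is t are W and I after t iterations,
rs t is the column chosen in iteration t+1 (ties and minimizers arbitrary).\<close>
definition shareboost_run ::
  "('d,'k) example list \<Rightarrow> nat \<Rightarrow> (nat \<Rightarrow> real^'d^'k) \<Rightarrow> (nat \<Rightarrow> 'd set) \<Rightarrow> (nat \<Rightarrow> 'd) \<Rightarrow> bool" where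
  "shareboost_run S T Ws Is rs \<longleftrightarrow>
     Ws 0 = 0 \<and> Is 0 = {} \<and>
     (\<forall>t<T.
        (\<forall>i. l1norm (column i (sb_grad S (Ws t))) \<le> l1norm (column (rs t) (sb_grad S (Ws t)))) \<and>
        Is (Suc t) = insert (rs t) (Is t) \<and>
        (\<forall>i. i \<notin> Is (Suc t) \<longrightarrow> column i (Ws (Suc t)) = 0) \<and>
        (\<forall>V. (\<forall>i. i \<notin> Is (Suc t) \<longrightarrow> column i V = 0) \<longrightarrow> sb_L S (Ws (Suc t)) \<le> sb_L S V))"

end

theory Submission
  imports Defs "HOL-Probability.Hoeffding"
begin

(* The loss of one example is a log-sum-exp of affine functions of W.  Writing W + D as a
   perturbation, the log-sum-exp changes by the logarithm of an exponential moment of a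
   finite distribution (the softmax weights); Jensen's inequality bounds this from below
   (L is convex: L(W+D) >= L(W) + <D, grad L(W)>) and Hoeffding's lemma from above
   (L is smooth along directions that move every score by at most M).

   For the ShareBoost iterates W_t, which minimise L over matrices supported on I_t:
   - the gradient vanishes on the columns in I_t, so convexity gives
     L(W_t) - L(Wstar) <= c r M_t, where M_t is the largest l1-norm of a gradient column;
   - moving along the selected column r_t by a signed multiple of the gradient gives
     L(W_{t+1}) <= L(W_t) - M_t^2 / 2.
   Together the excess loss d_t = L(W_t) - L(Wstar) satisfies d_t^2 <= 2 r^2 c^2 (d_t - d_{t+1}),
   which forces T d_T <= 2 r^2 c^2; the choice of T turns this into d_T <= eps/2.  The
   sparsity bound is the observation that W_T is supported on the T selected columns. *)

section \<open>Exponential moments of finite distributions\<close>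

lemma exp_le_chord:
  fixes a b x :: real
  assumes "a < b" "a \<le> x" "x \<le> b"
  shows "exp x \<le> ((b - x) * exp a + (x - a) * exp b) / (b - a)"
proof -
  define t where "t = (x - a) / (b - a)"
  have t: "0 \<le> t" "t \<le> 1" using assms by (auto simp: t_def divide_simps)
  have "t * (b - a) = x - a" using assms by (simp add: t_def)
  then have x: "x = (1 - t) * a + t * b" by (simp add: algebra_simps)
  have t1: "1 - t = (b - x) / (b - a)" using assms by (simp add: t_def field_simps)
  have "exp ((1 - t) * a + t * b) \<le> (1 - t) * exp a + t * exp b"
    using convex_onD[OF exp_convex t(1) t(2)] by simp
  also have "(1 - t) * exp a + t * exp b = ((b - x) * exp a + (x - a) * exp b) / (b - a)"
    unfolding t1 by (simp add: t_def add_divide_distrib)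
  finally show ?thesis using x by simp
qed

lemma exp_chord_le_hoeffding:
  fixes a b m :: real
  assumes "a < b" "a \<le> m" "m \<le> b"
  shows "((b - m) * exp a + (m - a) * exp b) / (b - a) \<le> exp (m + (b - a)\<^sup>2 / 8)"
proof -
  define h where "h = b - a"
  define q where "q = (m - a) / (b - a)"
  have h0: "h > 0" and q0: "q \<ge> 0" using assms by (simp_all add: h_def q_def)
  have pos: "1 + q * (exp h - 1) > 0"
    using q0 h0 by (intro add_pos_nonneg mult_nonneg_nonneg) auto
  have "ln (1 + q * (exp h - 1)) \<le> h * q + h\<^sup>2 / 8"
    using Hoeffdings_lemma_aux[of h q] h0 q0 by simp
  then have "1 + q * (exp h - 1) \<le> exp (h * q + h\<^sup>2 / 8)"
    using pos by (metis exp_le_cancel_iff exp_ln)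
  then have "exp a * (1 + q * (exp h - 1)) \<le> exp a * exp (h * q + h\<^sup>2 / 8)" by simp
  also have "exp a * exp (h * q + h\<^sup>2 / 8) = exp (m + (b - a)\<^sup>2 / 8)"
    using h0 by (simp add: h_def q_def exp_add[symmetric])
  also have "exp a * (1 + q * (exp h - 1)) = ((b - m) * exp a + (m - a) * exp b) / (b - a)"
    using h0 by (simp add: h_def q_def field_simps exp_diff)
  finally show ?thesis .
qed

lemma hoeffding_exp_finite:
  fixes p d :: "'a \<Rightarrow> real"
  assumes p: "\<And>j. j \<in> A \<Longrightarrow> p j \<ge> 0" and p1: "(\<Sum>j\<in>A. p j) = 1"
    and d: "\<And>j. j \<in> A \<Longrightarrow> a \<le> d j \<and> d j \<le> b"
  shows "(\<Sum>j\<in>A. p j * exp (d j)) \<le> exp ((\<Sum>j\<in>A. p j * d j) + (b - a)\<^sup>2 / 8)"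
proof -
  define m where "m = (\<Sum>j\<in>A. p j * d j)"
  have "a = (\<Sum>j\<in>A. p j * a)" using p1 by (simp add: sum_distrib_right[symmetric])
  also have "\<dots> \<le> m" unfolding m_def using p d by (intro sum_mono mult_left_mono) auto
  finally have ma: "a \<le> m" .
  have "m \<le> (\<Sum>j\<in>A. p j * b)" unfolding m_def using p d by (intro sum_mono mult_left_mono) auto
  also have "\<dots> = b" using p1 by (simp add: sum_distrib_right[symmetric])
  finally have mb: "m \<le> b" .
  show ?thesis
  proof (cases "a < b")
    case False
    then have "\<And>j. j \<in> A \<Longrightarrow> d j = a" and "m = a" using d ma mb by force+
    then show ?thesis using p1 by (simp add: m_def sum_distrib_right[symmetric])
  next
    case True
    have "(\<Sum>j\<in>A. p j * exp (d j))
        \<le> (\<Sum>j\<in>A. p j * (((b - d j) * exp a + (d j - a) * exp b) / (b - a)))"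
      using p d True by (intro sum_mono mult_left_mono exp_le_chord) auto
    also have "\<dots> = (\<Sum>j\<in>A. (p j * (b * exp a - a * exp b)
                              + (p j * d j) * (exp b - exp a)) / (b - a))"
      using True by (intro sum.cong) (auto simp: field_simps)
    also have "\<dots> = ((\<Sum>j\<in>A. p j) * (b * exp a - a * exp b)
                      + (\<Sum>j\<in>A. p j * d j) * (exp b - exp a)) / (b - a)"
      by (simp add: sum_divide_distrib[symmetric] sum.distrib sum_distrib_right)
    also have "\<dots> = ((b - m) * exp a + (m - a) * exp b) / (b - a)"
      using p1 unfolding m_def by (simp add: algebra_simps)
    also have "\<dots> \<le> exp (m + (b - a)\<^sup>2 / 8)"
      using True ma mb by (rule exp_chord_le_hoeffding)
    finally show ?thesis by (simp add: m_def)
  qed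
qed

lemma jensen_exp_finite:
  fixes p d :: "'a \<Rightarrow> real"
  assumes "finite A" and "\<And>j. j \<in> A \<Longrightarrow> p j \<ge> 0" and p1: "(\<Sum>j\<in>A. p j) = 1"
  shows "exp (\<Sum>j\<in>A. p j * d j) \<le> (\<Sum>j\<in>A. p j * exp (d j))"
proof -
  have "A \<noteq> {}" using p1 by auto
  from convex_on_sum[OF assms(1) this exp_convex p1, of d] assms(2) show ?thesis by simp
qed


section \<open>Log-sum-exp and softmax weights\<close>

definition softmax :: "('k::finite \<Rightarrow> real) \<Rightarrow> 'k \<Rightarrow> real" where
  "softmax z j = exp (z j) / (\<Sum>i\<in>UNIV. exp (z i))"

lemma sum_exp_pos: "0 < (\<Sum>j\<in>UNIV. exp (z j :: real))"
  for z :: "'k::finite \<Rightarrow> real"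
  by (intro sum_pos) auto

lemma softmax_pos: "0 < softmax z j"
  using sum_exp_pos[of z] by (simp add: softmax_def)

lemma softmax_sum: "(\<Sum>j\<in>UNIV. softmax z j) = 1"
  using sum_exp_pos[of z] by (simp add: softmax_def sum_divide_distrib[symmetric])

lemma lse_shift:
  fixes z d :: "'k::finite \<Rightarrow> real"
  shows "ln (\<Sum>j\<in>UNIV. exp (z j + d j))
         = ln (\<Sum>j\<in>UNIV. exp (z j)) + ln (\<Sum>j\<in>UNIV. softmax z j * exp (d j))"
proof -
  have "(\<Sum>j\<in>UNIV. exp (z j + d j))
        = (\<Sum>j\<in>UNIV. exp (z j)) * (\<Sum>j\<in>UNIV. softmax z j * exp (d j))"
    using sum_exp_pos[of z] by (simp add: softmax_def sum_distrib_left exp_add)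
  moreover have "0 < (\<Sum>j\<in>UNIV. softmax z j * exp (d j))"
    by (intro sum_pos) (auto simp: softmax_pos)
  ultimately show ?thesis using sum_exp_pos[of z] by (simp add: ln_mult)
qed

lemma lse_lower:
  fixes z d :: "'k::finite \<Rightarrow> real"
  shows "ln (\<Sum>j\<in>UNIV. exp (z j)) + (\<Sum>j\<in>UNIV. softmax z j * d j) \<le> ln (\<Sum>j\<in>UNIV. exp (z j + d j))"
proof -
  have "exp (\<Sum>j\<in>UNIV. softmax z j * d j) \<le> (\<Sum>j\<in>UNIV. softmax z j * exp (d j))"
    by (rule jensen_exp_finite) (auto simp: softmax_sum less_imp_le[OF softmax_pos])
  moreover have "0 < (\<Sum>j\<in>UNIV. softmax z j * exp (d j))"
    by (intro sum_pos) (auto simp: softmax_pos)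
  ultimately show ?thesis by (simp add: lse_shift ln_ge_iff)
qed

lemma lse_upper:
  fixes z d :: "'k::finite \<Rightarrow> real"
  assumes "\<And>j. a \<le> d j \<and> d j \<le> b"
  shows "ln (\<Sum>j\<in>UNIV. exp (z j + d j))
         \<le> ln (\<Sum>j\<in>UNIV. exp (z j)) + (\<Sum>j\<in>UNIV. softmax z j * d j) + (b - a)\<^sup>2 / 8"
proof -
  have "(\<Sum>j\<in>UNIV. softmax z j * exp (d j)) \<le> exp ((\<Sum>j\<in>UNIV. softmax z j * d j) + (b - a)\<^sup>2 / 8)"
    using assms by (intro hoeffding_exp_finite) (auto simp: softmax_sum less_imp_le[OF softmax_pos])
  moreover have "0 < (\<Sum>j\<in>UNIV. softmax z j * exp (d j))"
    by (intro sum_pos) (auto simp: softmax_pos)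
  ultimately show ?thesis by (simp add: lse_shift ln_le_cancel_iff[symmetric])
qed

lemma lse_directional_deriv:
  fixes z d :: "'k::finite \<Rightarrow> real"
  shows "((\<lambda>s. ln (\<Sum>j\<in>UNIV. exp (z j + s * d j))) has_real_derivative
           (\<Sum>j\<in>UNIV. softmax z j * d j)) (at 0)"
proof -
  have "((\<lambda>s. ln (\<Sum>j\<in>UNIV. exp (z j + s * d j))) has_real_derivative
           (\<Sum>j\<in>UNIV. exp (z j) * d j) / (\<Sum>j\<in>UNIV. exp (z j))) (at 0)"
    by (rule derivative_eq_intros refl | simp add: sum_exp_pos)+
  then show ?thesis by (simp add: softmax_def sum_divide_distrib)
qed


section \<open>The ShareBoost loss as a log-sum-exp\<close>

text \<open>The loss of W on ex = (x, y) is the log-sum-exp of the scores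
  1[j \<noteq> y] - (Wx)_y + (Wx)_j; adding D to W shifts score j by the gap (Dx)_j - (Dx)_y.\<close>
definition loss_scores :: "real^'d^'k \<Rightarrow> ('d,'k) example \<Rightarrow> 'k \<Rightarrow> real" where
  "loss_scores W ex j = (if j \<noteq> snd ex then 1 else 0) - (W *v fst ex) $ snd ex + (W *v fst ex) $ j"

definition score_gap :: "real^'d^'k \<Rightarrow> ('d,'k) example \<Rightarrow> 'k \<Rightarrow> real" where
  "score_gap D ex j = (D *v fst ex) $ j - (D *v fst ex) $ snd ex"

definition loss_slope :: "real^'d^'k::finite \<Rightarrow> real^'d^'k \<Rightarrow> ('d,'k) example \<Rightarrow> real" where
  "loss_slope W D ex = (\<Sum>j\<in>UNIV. softmax (loss_scores W ex) j * score_gap D ex j)"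

lemma sb_loss_lse: "sb_loss W ex = ln (\<Sum>j\<in>UNIV. exp (loss_scores W ex j))"
  by (cases ex) (simp add: sb_loss_def loss_scores_def)

lemma loss_scores_along:
  "loss_scores (W + s *\<^sub>R D) ex j = loss_scores W ex j + s * score_gap D ex j"
  by (simp add: loss_scores_def score_gap_def matrix_vector_mult_add_rdistrib
      scaleR_matrix_vector_assoc[symmetric] algebra_simps)

lemma sb_loss_along:
  "sb_loss (W + s *\<^sub>R D) ex = ln (\<Sum>j\<in>UNIV. exp (loss_scores W ex j + s * score_gap D ex j))"
  by (simp add: sb_loss_lse loss_scores_along)

lemma sb_loss_lower: "sb_loss W ex + loss_slope W D ex \<le> sb_loss (W + D) ex"
  using lse_lower[of "loss_scores W ex" "score_gap D ex"] sb_loss_along[of W 1 D ex]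
  by (simp add: sb_loss_lse loss_slope_def)

lemma sb_loss_upper:
  assumes "\<And>j. a \<le> score_gap D ex j \<and> score_gap D ex j \<le> b"
  shows "sb_loss (W + D) ex \<le> sb_loss W ex + loss_slope W D ex + (b - a)\<^sup>2 / 8"
  using lse_upper[of a "score_gap D ex" b "loss_scores W ex"] sb_loss_along[of W 1 D ex] assms
  by (simp add: sb_loss_lse loss_slope_def)

lemma sb_L_nth: "sb_L S W = (\<Sum>i<length S. sb_loss W (S!i)) / real (length S)"
  by (simp add: sb_L_def sum_list_sum_nth atLeast0LessThan)

section \<open>The gradient of L\<close>

lemma bounded_linear_score: "bounded_linear (\<lambda>W::real^'d::finite^'k::finite. (W *v x) $ j)"
proof -
  have "linear (\<lambda>W::real^'d^'k. (W *v x) $ j)"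
    by (rule linearI)
       (simp_all add: matrix_vector_mult_add_rdistrib scaleR_matrix_vector_assoc[symmetric])
  then show ?thesis by (simp add: linear_conv_bounded_linear)
qed

lemma sb_loss_differentiable: "\<exists>F. ((\<lambda>W. sb_loss W ex) has_derivative F) (at W)"
proof -
  have score: "((\<lambda>W. (W *v fst ex) $ j) has_derivative (\<lambda>h. (h *v fst ex) $ j)) (at W)" for j
    by (rule bounded_linear.has_derivative[OF bounded_linear_score has_derivative_ident])
  have "((\<lambda>W. loss_scores W ex j) has_derivative
          (\<lambda>h. 0 - (h *v fst ex) $ snd ex + (h *v fst ex) $ j)) (at W)" for j
    unfolding loss_scores_def by (intro has_derivative_add has_derivative_diff has_derivative_const score)
  then have "((\<lambda>W. \<Sum>j\<in>UNIV. exp (loss_scores W ex j)) has_derivative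
     (\<lambda>h. \<Sum>j\<in>UNIV. (0 - (h *v fst ex) $ snd ex + (h *v fst ex) $ j) * exp (loss_scores W ex j))) (at W)"
    by (intro has_derivative_sum has_derivative_exp)
  from has_derivative_ln[OF sum_exp_pos this] show ?thesis unfolding sb_loss_lse by blast
qed

lemma sb_L_differentiable: "\<exists>F. (sb_L S has_derivative F) (at W)"
proof -
  have "\<forall>i. \<exists>F. ((\<lambda>W. sb_loss W (S!i)) has_derivative F) (at W)"
    using sb_loss_differentiable by blast
  then obtain F where F: "\<And>i. ((\<lambda>W. sb_loss W (S!i)) has_derivative F i) (at W)"
    by metis
  have "((\<lambda>W. (1 / real (length S)) * (\<Sum>i<length S. sb_loss W (S!i))) has_derivative
      (\<lambda>h. (1 / real (length S)) * (\<Sum>i<length S. F i h))) (at W)"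
    by (intro has_derivative_mult_right has_derivative_sum F)
  moreover have "sb_L S = (\<lambda>W. (1 / real (length S)) * (\<Sum>i<length S. sb_loss W (S!i)))"
    by (rule ext) (simp add: sb_L_nth)
  ultimately show ?thesis by auto
qed

text \<open>On a Euclidean space a Frechet derivative is represented by a gradient, and the
  gradient is unique; hence the definite description in sb_grad denotes the gradient.\<close>
lemma gderiv_of_has_derivative:
  fixes f :: "'a::euclidean_space \<Rightarrow> real"
  assumes "(f has_derivative F) (at W)"
  shows "GDERIV f W :> (\<Sum>b\<in>Basis. F b *\<^sub>R b)"
proof -
  have lin: "linear F" using has_derivative_linear[OF assms] .
  have "F h = h \<bullet> (\<Sum>b\<in>Basis. F b *\<^sub>R b)" for h
  proof -
    have "F h = F (\<Sum>b\<in>Basis. (h \<bullet> b) *\<^sub>R b)" by (simp only: euclidean_representation)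
    also have "\<dots> = (\<Sum>b\<in>Basis. (h \<bullet> b) * F b)"
      by (simp only: linear_sum[OF lin] linear_scale[OF lin] real_scaleR_def)
    also have "\<dots> = h \<bullet> (\<Sum>b\<in>Basis. F b *\<^sub>R b)"
      by (simp only: inner_sum_right inner_scaleR_right mult.commute)
    finally show ?thesis .
  qed
  then have "F = (\<lambda>h. h \<bullet> (\<Sum>b\<in>Basis. F b *\<^sub>R b))" by (rule ext)
  then show ?thesis unfolding gderiv_def using assms by simp
qed

lemma gderiv_unique:
  assumes "GDERIV f W :> G1" "GDERIV f W :> G2"
  shows "G1 = G2"
proof -
  have "(\<lambda>h. h \<bullet> G1) = (\<lambda>h. h \<bullet> G2)"
    using has_derivative_unique assms unfolding gderiv_def by blast
  then have "(G1 - G2) \<bullet> G1 = (G1 - G2) \<bullet> G2" by (rule fun_cong)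
  then have "(G1 - G2) \<bullet> (G1 - G2) = 0" by (simp add: inner_diff_right)
  then show ?thesis by simp
qed

lemma sb_grad_gderiv: "GDERIV (sb_L S) W :> sb_grad S W"
proof -
  obtain F where "(sb_L S has_derivative F) (at W)" using sb_L_differentiable by blast
  then have G: "GDERIV (sb_L S) W :> (\<Sum>b\<in>Basis. F b *\<^sub>R b)" by (rule gderiv_of_has_derivative)
  show ?thesis unfolding sb_grad_def
    by (rule theI[of _ "(\<Sum>b\<in>Basis. F b *\<^sub>R b)"], rule G, rule gderiv_unique[OF _ G])
qed

lemma gderiv_directional:
  assumes "GDERIV f W :> G"
  shows "((\<lambda>s. f (W + s *\<^sub>R D)) has_real_derivative (D \<bullet> G)) (at 0)"
proof -
  have line: "((\<lambda>s::real. W + s *\<^sub>R D) has_derivative (\<lambda>s. s *\<^sub>R D)) (at 0)"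
    using has_derivative_add[OF has_derivative_const[of W]
                             has_derivative_scaleR_left[OF has_derivative_ident, of D]]
    by simp
  have "(f has_derivative (\<lambda>h. h \<bullet> G)) (at (W + 0 *\<^sub>R D))"
    using assms unfolding gderiv_def by simp
  from has_derivative_compose[OF line this]
  have "((\<lambda>s. f (W + s *\<^sub>R D)) has_derivative (\<lambda>s. s * (D \<bullet> G))) (at 0)"
    by (simp add: o_def)
  moreover have "(\<lambda>s. s * (D \<bullet> G)) = (*) (D \<bullet> G)" by (auto simp: mult.commute)
  ultimately show ?thesis by (simp add: has_field_derivative_def)
qed

text \<open>Computing the same directional derivative example by example identifies the
  inner product with the gradient as the average loss slope.\<close>
lemma inner_sb_grad: "D \<bullet> sb_grad S W = (\<Sum>i<length S. loss_slope W D (S!i)) / real (length S)"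
proof -
  have "((\<lambda>s. (\<Sum>i<length S. ln (\<Sum>j\<in>UNIV. exp (loss_scores W (S!i) j + s * score_gap D (S!i) j))) 
              / real (length S))
     has_real_derivative (\<Sum>i<length S. loss_slope W D (S!i)) / real (length S)) (at 0)"
    unfolding loss_slope_def by (intro DERIV_cdivide DERIV_sum lse_directional_deriv)
  then have "((\<lambda>s. sb_L S (W + s *\<^sub>R D)) has_real_derivative
               (\<Sum>i<length S. loss_slope W D (S!i)) / real (length S)) (at 0)"
    by (simp add: sb_L_nth sb_loss_along)
  with gderiv_directional[OF sb_grad_gderiv] show ?thesis by (rule DERIV_unique)
qed


section \<open>First-order bounds on L\<close>

lemma sb_L_lower: "sb_L S W + D \<bullet> sb_grad S W \<le> sb_L S (W + D)"
proof -
  have "(\<Sum>i<length S. sb_loss W (S!i)) + (\<Sum>i<length S. loss_slope W D (S!i))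
        \<le> (\<Sum>i<length S. sb_loss (W + D) (S!i))"
    unfolding sum.distrib[symmetric] by (intro sum_mono sb_loss_lower)
  then show ?thesis unfolding inner_sb_grad sb_L_nth add_divide_distrib[symmetric]
    by (intro divide_right_mono) auto
qed

lemma sb_L_upper:
  assumes "\<And>i j. i < length S \<Longrightarrow> a i \<le> score_gap D (S!i) j \<and> score_gap D (S!i) j \<le> a i + w"
  shows "sb_L S (W + D) \<le> sb_L S W + D \<bullet> sb_grad S W + w\<^sup>2 / 8"
proof (cases "S = []")
  case True then show ?thesis by (simp add: sb_L_def inner_sb_grad)
next
  case False
  have "(\<Sum>i<length S. sb_loss (W + D) (S!i))
        \<le> (\<Sum>i<length S. sb_loss W (S!i) + loss_slope W D (S!i) + w\<^sup>2 / 8)"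
  proof (rule sum_mono)
    fix i assume "i \<in> {..<length S}"
    then have "\<And>j. a i \<le> score_gap D (S!i) j \<and> score_gap D (S!i) j \<le> a i + w" using assms by simp
    from sb_loss_upper[of "a i" D "S!i" "a i + w" W, OF this]
    show "sb_loss (W + D) (S!i) \<le> sb_loss W (S!i) + loss_slope W D (S!i) + w\<^sup>2 / 8" by simp
  qed
  also have "\<dots> = (\<Sum>i<length S. sb_loss W (S!i)) + (\<Sum>i<length S. loss_slope W D (S!i))
                   + real (length S) * (w\<^sup>2 / 8)"
    by (simp add: sum.distrib)
  finally show ?thesis using False unfolding inner_sb_grad sb_L_nth
    by (simp add: field_simps)
qed

lemma line_min_grad_orthogonal:
  assumes "\<And>s. sb_L S W \<le> sb_L S (W + s *\<^sub>R D)"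
  shows "D \<bullet> sb_grad S W = 0"
  using DERIV_local_min[OF gderiv_directional[OF sb_grad_gderiv, of S W D], of 1] assms by simp

section \<open>Minimisers over a set of columns\<close>

definition supported_on :: "'d set \<Rightarrow> real^'d^'k \<Rightarrow> bool" where
  "supported_on I V \<longleftrightarrow> (\<forall>i j. i \<notin> I \<longrightarrow> V $ j $ i = 0)"

lemma column_zero_iff: "column i V = 0 \<longleftrightarrow> (\<forall>j. V $ j $ i = 0)"
  by (simp add: column_def vec_eq_iff)

lemma l1norm_column: "l1norm (column i G) = (\<Sum>j\<in>UNIV. \<bar>G $ j $ i\<bar>)"
  by (simp add: l1norm_def column_def)

lemma inner_matrix: "(A::real^'d::finite^'k::finite) \<bullet> B = (\<Sum>j\<in>UNIV. \<Sum>i\<in>UNIV. A $ j $ i * B $ j $ i)"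
  by (simp add: inner_vec_def)

text \<open>At a minimiser over the matrices supported on I, the gradient vanishes on I:
  perturbing along the gradient's own column i stays in the support.\<close>
lemma supported_min_grad_zero:
  fixes W :: "real^'d::finite^'k::finite"
  assumes "supported_on I W" "\<forall>V. supported_on I V \<longrightarrow> sb_L S W \<le> sb_L S V" "i \<in> I"
  shows "sb_grad S W $ j $ i = 0"
proof -
  define G where "G = sb_grad S W"
  define D :: "real^'d^'k" where "D = (\<chi> j. \<chi> i'. if i' = i then G $ j $ i else 0)"
  have "supported_on I (W + s *\<^sub>R D)" for s using assms(1,3) by (auto simp: supported_on_def D_def)
  then have "D \<bullet> G = 0" unfolding G_def by (intro line_min_grad_orthogonal) (use assms(2) in blast)
  moreover have "D \<bullet> G = (\<Sum>j\<in>UNIV. (G $ j $ i)\<^sup>2)"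
    by (simp add: inner_matrix D_def mult_delta_left power2_eq_square)
  ultimately have "(\<Sum>j\<in>UNIV. (G $ j $ i)\<^sup>2) = 0" by simp
  then have "\<forall>j\<in>UNIV. (G $ j $ i)\<^sup>2 = 0" by (subst (asm) sum_nonneg_eq_0_iff) auto
  then show ?thesis by (simp add: G_def)
qed

lemma column_inner_lower:
  fixes V G :: "real^'d::finite^'k::finite"
  assumes "\<And>j. \<bar>V $ j $ i\<bar> \<le> c"
  shows "- (c * l1norm (column i G)) \<le> (\<Sum>j\<in>UNIV. V $ j $ i * G $ j $ i)"
proof -
  have "- (c * l1norm (column i G)) = (\<Sum>j\<in>UNIV. - (c * \<bar>G $ j $ i\<bar>))"
    by (simp add: l1norm_column sum_distrib_left sum_negf)
  also have "\<dots> \<le> (\<Sum>j\<in>UNIV. V $ j $ i * G $ j $ i)"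
  proof (rule sum_mono)
    fix j
    have "- (c * \<bar>G $ j $ i\<bar>) \<le> - (\<bar>V $ j $ i\<bar> * \<bar>G $ j $ i\<bar>)"
      using assms by (simp add: mult_right_mono)
    also have "\<dots> \<le> V $ j $ i * G $ j $ i"
      using abs_ge_self[of "-(V $ j $ i * G $ j $ i)"] by (simp add: abs_mult)
    finally show "- (c * \<bar>G $ j $ i\<bar>) \<le> V $ j $ i * G $ j $ i" .
  qed
  finally show ?thesis .
qed

text \<open>Excess loss of a supported minimiser over any competitor Wst with entries in [-c, c]:
  only the (at most norm_inf0 Wst) columns outside I on which Wst is nonzero contribute to
  the tangent-plane bound, each by at most c times the largest gradient-column l1-norm M.\<close>
lemma supported_min_excess:
  fixes W Wst :: "real^'d::finite^'k::finite"
  assumes sW: "supported_on I W" and opt: "\<forall>V. supported_on I V \<longrightarrow> sb_L S W \<le> sb_L S V"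
    and cb: "\<forall>j i. \<bar>Wst $ j $ i\<bar> \<le> c" and c0: "c \<ge> 0"
    and Mb: "\<forall>i. l1norm (column i (sb_grad S W)) \<le> M"
  shows "sb_L S W - sb_L S Wst \<le> c * real (norm_inf0 Wst) * M"
proof -
  define G where "G = sb_grad S W"
  define C where "C = {i. column i Wst \<noteq> 0}"
  have M0: "M \<ge> 0"
    using Mb order_trans[OF _ Mb[rule_format]] by (fastforce simp: l1norm_def sum_nonneg)
  have col: "- (if i \<in> C then c * M else 0) \<le> (\<Sum>j\<in>UNIV. (Wst - W) $ j $ i * G $ j $ i)" for i
  proof (cases "i \<in> I")
    case True
    then have "\<And>j. G $ j $ i = 0" unfolding G_def using supported_min_grad_zero[OF sW opt] by blast
    then show ?thesis using c0 M0 by simp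
  next
    case False
    then have W0: "\<And>j. W $ j $ i = 0" using sW by (simp add: supported_on_def)
    have "- (c * M) \<le> - (c * l1norm (column i G))"
      using Mb c0 G_def by (simp add: mult_left_mono)
    also have "\<dots> \<le> (\<Sum>j\<in>UNIV. Wst $ j $ i * G $ j $ i)"
      using cb by (intro column_inner_lower) auto
    finally show ?thesis using W0 by (cases "i \<in> C") (auto simp: C_def column_zero_iff)
  qed
  have "- (real (card C) * (c * M)) = (\<Sum>i\<in>UNIV. - (if i \<in> C then c * M else 0))"
    by (simp add: sum_negf sum.If_cases)
  also have "\<dots> \<le> (\<Sum>i\<in>UNIV. \<Sum>j\<in>UNIV. (Wst - W) $ j $ i * G $ j $ i)"
    by (intro sum_mono col)
  also have "\<dots> = (Wst - W) \<bullet> G"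
    unfolding inner_matrix by (rule sum.swap)
  also have "\<dots> \<le> sb_L S Wst - sb_L S W"
    using sb_L_lower[of S W "Wst - W"] by (simp add: G_def)
  finally show ?thesis
    unfolding norm_inf0_def infnorm_pos_lt C_def by (simp add: algebra_simps)
qed


section \<open>The greedy step\<close>

definition column_descent :: "real^'d^'k \<Rightarrow> 'd \<Rightarrow> real^'d^'k" where
  "column_descent G r = (\<chi> j. \<chi> i. if i = r then - (l1norm (column r G) * sgn (G $ j $ r)) else 0)"

lemma column_descent_inner:
  fixes G :: "real^'d::finite^'k::finite"
  shows "column_descent G r \<bullet> G = - (l1norm (column r G))\<^sup>2"
proof -
  have sgn_mult_self_eq_abs: "sgn g * g = \<bar>g\<bar>" for g :: real
    by (simp add: sgn_if)
  have "column_descent G r \<bullet> G = (\<Sum>j\<in>UNIV. - (l1norm (column r G) * sgn (G $ j $ r)) * G $ j $ r)"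
    by (simp add: inner_matrix column_descent_def mult_delta_left)
  also have "\<dots> = - l1norm (column r G) * (\<Sum>j\<in>UNIV. \<bar>G $ j $ r\<bar>)"
    by (simp add: sum_distrib_left mult.assoc sum_negf sgn_mult_self_eq_abs)
  also have "\<dots> = - (l1norm (column r G))\<^sup>2" by (simp add: l1norm_column power2_eq_square)
  finally show ?thesis .
qed

lemma column_descent_score_bound:
  fixes G :: "real^'d::finite^'k::finite"
  assumes "\<bar>x $ r\<bar> \<le> 1"
  shows "\<bar>(column_descent G r *v x) $ j\<bar> \<le> l1norm (column r G)"
proof -
  have M0: "l1norm (column r G) \<ge> 0" by (simp add: l1norm_def sum_nonneg)
  have "\<bar>(column_descent G r *v x) $ j\<bar> = l1norm (column r G) * \<bar>sgn (G $ j $ r)\<bar> * \<bar>x $ r\<bar>"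
    using M0 by (simp add: matrix_vector_mult_def column_descent_def mult_delta_left abs_mult)
  also have "\<dots> \<le> l1norm (column r G) * 1 * 1"
    using M0 assms by (intro mult_mono) (auto simp: abs_sgn_eq)
  finally show ?thesis by simp
qed

text \<open>One greedy step: minimising over the support extended by column r decreases L by at
  least half the squared l1-norm of gradient column r (smoothness along the descent
  direction, whose score gaps lie in windows of width 2M).\<close>
lemma greedy_step_decrease:
  fixes W W' :: "real^'d::finite^'k::finite"
  assumes X: "\<forall>(x, y)\<in>set S. \<forall>i. \<bar>x $ i\<bar> \<le> 1" and sW: "supported_on I W"
    and opt: "\<forall>V. supported_on (insert r I) V \<longrightarrow> sb_L S W' \<le> sb_L S V"
  shows "sb_L S W' \<le> sb_L S W - (l1norm (column r (sb_grad S W)))\<^sup>2 / 2"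
proof -
  define M where "M = l1norm (column r (sb_grad S W))"
  define D where "D = column_descent (sb_grad S W) r"
  define a where "a i = - M - (D *v fst (S!i)) $ snd (S!i)" for i
  have window: "a i \<le> score_gap D (S!i) j \<and> score_gap D (S!i) j \<le> a i + 2 * M"
    if "i < length S" for i j
  proof -
    have "\<bar>fst (S!i) $ r\<bar> \<le> 1" using X nth_mem[OF that] by (cases "S!i") fastforce
    then have "\<bar>(D *v fst (S!i)) $ j\<bar> \<le> M"
      unfolding D_def M_def by (rule column_descent_score_bound)
    then show ?thesis by (simp add: a_def score_gap_def abs_le_iff)
  qed
  have "sb_L S (W + D) \<le> sb_L S W + D \<bullet> sb_grad S W + (2 * M)\<^sup>2 / 8"
    using window by (rule sb_L_upper)
  also have "\<dots> = sb_L S W - M\<^sup>2 / 2"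
    by (simp add: D_def M_def column_descent_inner power2_eq_square)
  finally have "sb_L S (W + D) \<le> sb_L S W - M\<^sup>2 / 2" .
  moreover have "supported_on (insert r I) (W + D)"
    using sW by (auto simp: supported_on_def D_def column_descent_def)
  ultimately show ?thesis using opt by (fastforce simp: M_def)
qed


section \<open>Runs of ShareBoost\<close>

lemma shareboost_invariant:
  fixes Ws :: "nat \<Rightarrow> real^'d::finite^'k::finite"
  assumes run: "shareboost_run S T Ws Is rs" and "t \<le> T"
  shows "supported_on (Is t) (Ws t) \<and> (\<forall>V. supported_on (Is t) V \<longrightarrow> sb_L S (Ws t) \<le> sb_L S V)
         \<and> card (Is t) \<le> t"
  using \<open>t \<le> T\<close>
proof (induction t)
  case 0
  have "supported_on {} V \<Longrightarrow> V = 0" for V :: "real^'d^'k"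
    by (simp add: supported_on_def vec_eq_iff)
  then show ?case using run by (auto simp: shareboost_run_def supported_on_def)
next
  case (Suc t)
  then have ih: "card (Is t) \<le> t" by simp
  from run Suc.prems have step: "Is (Suc t) = insert (rs t) (Is t)"
      "\<forall>i. i \<notin> Is (Suc t) \<longrightarrow> column i (Ws (Suc t)) = 0"
      "\<forall>V. (\<forall>i. i \<notin> Is (Suc t) \<longrightarrow> column i V = 0) \<longrightarrow> sb_L S (Ws (Suc t)) \<le> sb_L S V"
    unfolding shareboost_run_def by auto
  then show ?case using ih by (simp add: supported_on_def column_zero_iff card_insert_if)
qed

lemma shareboost_sparsity:
  assumes run: "shareboost_run S T Ws Is rs"
  shows "norm_inf0 (Ws T) \<le> T"
proof -
  have inv: "supported_on (Is T) (Ws T)" "card (Is T) \<le> T"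
    using shareboost_invariant[OF run, of T] by auto
  then have "{i. infnorm (column i (Ws T)) > 0} \<subseteq> Is T"
    by (auto simp: supported_on_def infnorm_pos_lt column_zero_iff)
  then have "norm_inf0 (Ws T) \<le> card (Is T)" unfolding norm_inf0_def by (intro card_mono) auto
  then show ?thesis using inv by simp
qed

lemma shareboost_progress:
  fixes Ws :: "nat \<Rightarrow> real^'d::finite^'k::finite"
  assumes X: "\<forall>(x, y)\<in>set S. \<forall>i. \<bar>x $ i\<bar> \<le> 1" and run: "shareboost_run S T Ws Is rs"
    and "t < T" and cb: "\<forall>j i. \<bar>Wst $ j $ i\<bar> \<le> c" and "c \<ge> 0"
  shows "sb_L S (Ws (Suc t)) \<le> sb_L S (Ws t)"
    and "sb_L S Wst \<le> sb_L S (Ws t) \<Longrightarrow>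
           (sb_L S (Ws t) - sb_L S Wst)\<^sup>2
             \<le> 2 * (c * real (norm_inf0 Wst))\<^sup>2 * (sb_L S (Ws t) - sb_L S (Ws (Suc t)))"
proof -
  define M where "M = l1norm (column (rs t) (sb_grad S (Ws t)))"
  from run \<open>t < T\<close> have greedy: "\<forall>i. l1norm (column i (sb_grad S (Ws t))) \<le> M"
    and Is_Suc: "Is (Suc t) = insert (rs t) (Is t)"
    unfolding shareboost_run_def M_def by blast+
  have inv: "supported_on (Is t) (Ws t)" "\<forall>V. supported_on (Is t) V \<longrightarrow> sb_L S (Ws t) \<le> sb_L S V"
    using shareboost_invariant[OF run, of t] \<open>t < T\<close> by auto
  have opt': "\<forall>V. supported_on (insert (rs t) (Is t)) V \<longrightarrow> sb_L S (Ws (Suc t)) \<le> sb_L S V"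
    using shareboost_invariant[OF run, of "Suc t"] \<open>t < T\<close> Is_Suc by auto
  have decrease: "sb_L S (Ws (Suc t)) \<le> sb_L S (Ws t) - M\<^sup>2 / 2"
    using greedy_step_decrease[OF X inv(1) opt'] by (simp add: M_def)
  then show "sb_L S (Ws (Suc t)) \<le> sb_L S (Ws t)" using zero_le_power2[of M] by linarith
  have excess: "sb_L S (Ws t) - sb_L S Wst \<le> c * real (norm_inf0 Wst) * M"
    using supported_min_excess[OF inv cb \<open>c \<ge> 0\<close> greedy] .
  assume "sb_L S Wst \<le> sb_L S (Ws t)"
  then have "(sb_L S (Ws t) - sb_L S Wst)\<^sup>2 \<le> (c * real (norm_inf0 Wst) * M)\<^sup>2"
    using excess by (intro power_mono) auto
  also have "\<dots> = 2 * (c * real (norm_inf0 Wst))\<^sup>2 * (M\<^sup>2 / 2)"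
    by (simp add: power_mult_distrib)
  also have "\<dots> \<le> 2 * (c * real (norm_inf0 Wst))\<^sup>2 * (sb_L S (Ws t) - sb_L S (Ws (Suc t)))"
    using decrease by (intro mult_left_mono) auto
  finally show "(sb_L S (Ws t) - sb_L S Wst)\<^sup>2
             \<le> 2 * (c * real (norm_inf0 Wst))\<^sup>2 * (sb_L S (Ws t) - sb_L S (Ws (Suc t)))" .
qed


section \<open>The excess-loss recurrence\<close>

lemma recurrence_step:
  fixes A d0 d1 :: real and t :: nat
  assumes h: "real t * d0 \<le> A" and A0: "A \<ge> 0" and dd: "d1 \<le> d0"
    and sq: "d0 \<ge> 0 \<Longrightarrow> d0\<^sup>2 \<le> A * (d0 - d1)"
  shows "real (Suc t) * d1 \<le> A"
proof (cases "d1 \<le> 0")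
  case True
  then have "real (Suc t) * d1 \<le> 0" by (simp add: mult_nonneg_nonpos)
  then show ?thesis using A0 by linarith
next
  case False
  then have d1: "d1 > 0" by simp
  then have d0: "d0 > 0" using dd by simp
  have "d0 * (real (Suc t) * d1) = (real t * d0) * d1 + d0 * d1" by (simp add: algebra_simps)
  also have "\<dots> \<le> A * d1 + d0 * d1" using h d1 by (simp add: mult_right_mono)
  also have "\<dots> \<le> (A * d0 - d0\<^sup>2) + d0 * d1" using sq d0 by (simp add: algebra_simps)
  also have "\<dots> \<le> A * d0" using dd d0 by (simp add: power2_eq_square mult_left_mono)
  finally have "d0 * (real (Suc t) * d1) \<le> d0 * A" by (simp add: mult.commute)
  then show ?thesis using d0 by simp
qed

lemma recurrence_bound:
  fixes d :: "nat \<Rightarrow> real"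
  assumes A0: "A \<ge> 0" and dec: "\<And>t. t < T \<Longrightarrow> d (Suc t) \<le> d t"
    and sq: "\<And>t. t < T \<Longrightarrow> d t \<ge> 0 \<Longrightarrow> (d t)\<^sup>2 \<le> A * (d t - d (Suc t))"
  shows "real T * d T \<le> A"
proof -
  have "real t * d t \<le> A" if "t \<le> T" for t
    using that
  proof (induction t)
    case 0
    then show ?case using A0 by simp
  next
    case (Suc t)
    then have "t < T" by simp
    with Suc show ?case using recurrence_step[OF _ A0 dec sq] by simp
  qed
  then show ?thesis by simp
qed

lemma excess_after_horizon:
  fixes A \<epsilon> T d :: real
  assumes "A > 0" "\<epsilon> > 0" and T: "2 * A / \<epsilon> \<le> T" and Td: "T * d \<le> A"
  shows "d \<le> \<epsilon> / 2"
proof (cases "d \<le> 0")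
  case False
  then have "(2 * A / \<epsilon>) * d \<le> T * d" using T by (intro mult_right_mono) auto
  then have "(2 * A / \<epsilon>) * d \<le> A" using Td by linarith
  then have "A * (2 * d) \<le> A * \<epsilon>" using \<open>\<epsilon> > 0\<close> by (simp add: field_simps)
  then show ?thesis using \<open>A > 0\<close> by simp
qed (use assms in simp)

lemma norm_inf0_eq_0: "norm_inf0 W = 0 \<Longrightarrow> W = 0"
  for W :: "real^'d::finite^'k::finite"
proof -
  assume "norm_inf0 W = 0"
  then have "{i. infnorm (column i W) > 0} = {}" by (simp add: norm_inf0_def)
  then have "\<forall>i. column i W = 0" by (auto simp: infnorm_pos_lt)
  then show "W = 0" by (simp add: column_def vec_eq_iff)
qed

theorem corollary1:
  fixes S :: "('d::finite, 'k::finite) example list"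
    and \<epsilon> c :: real and r :: nat and Wstar :: "real^'d^'k"
    and Ws :: "nat \<Rightarrow> real^'d^'k" and Is :: "nat \<Rightarrow> 'd set" and rs :: "nat \<Rightarrow> 'd"
  assumes "\<forall>(x, y)\<in>set S. \<forall>i. \<bar>x $ i\<bar> \<le> 1"
    and "\<epsilon> > 0" and "c > 0"
    and "sb_L S Wstar \<le> \<epsilon>"
    and "\<forall>j i. \<bar>Wstar $ j $ i\<bar> \<le> c"
    and "norm_inf0 Wstar = r"
    and "shareboost_run S (nat \<lceil>4 * real r ^ 2 * c ^ 2 / \<epsilon>\<rceil>) Ws Is rs"
  shows "sb_L S (Ws (nat \<lceil>4 * real r ^ 2 * c ^ 2 / \<epsilon>\<rceil>)) \<le> 2 * \<epsilon>
       \<and> norm_inf0 (Ws (nat \<lceil>4 * real r ^ 2 * c ^ 2 / \<epsilon>\<rceil>)) \<le> nat \<lceil>4 * real r ^ 2 * c ^ 2 / \<epsilon>\<rceil>"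
proof -
  define T where "T = nat \<lceil>4 * real r ^ 2 * c ^ 2 / \<epsilon>\<rceil>"
  have run: "shareboost_run S T Ws Is rs" using assms(7) by (simp add: T_def)
  have "sb_L S (Ws T) - sb_L S Wstar \<le> \<epsilon>"
  proof (cases "r = 0")
    case True
    then have "Wstar = 0" "T = 0" using assms(6) norm_inf0_eq_0 by (auto simp: T_def)
    then show ?thesis using run \<open>\<epsilon> > 0\<close> by (simp add: shareboost_run_def)
  next
    case False
    define A where "A = 2 * (c * real r)\<^sup>2"
    have A: "A > 0" using False \<open>c > 0\<close> by (simp add: A_def)
    have "2 * A / \<epsilon> = 4 * real r ^ 2 * c ^ 2 / \<epsilon>" by (simp add: A_def power_mult_distrib)
    also have "\<dots> \<le> real T" unfolding T_def by linarith
    finally have horizon: "2 * A / \<epsilon> \<le> real T" .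
    have "real T * (sb_L S (Ws T) - sb_L S Wstar) \<le> A"
      using shareboost_progress[OF assms(1) run _ assms(5)] \<open>c > 0\<close> assms(6)
      by (intro recurrence_bound[where d = "\<lambda>t. sb_L S (Ws t) - sb_L S Wstar"]) (auto simp: A_def)
    with A \<open>\<epsilon> > 0\<close> horizon have "sb_L S (Ws T) - sb_L S Wstar \<le> \<epsilon> / 2"
      by (rule excess_after_horizon)
    then show ?thesis using \<open>\<epsilon> > 0\<close> by simp
  qed
  then show ?thesis using assms(4) shareboost_sparsity[OF run] by (simp add: T_def)
qed

end
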